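(* There exists a constant $C>0$ such that for any $b\in C_c^\infty(\mathscr H^{n-1})$, $\eta\in(0,\infty)$, $f\in L^1_{\rm loc}(\mathscr H^{n-1})$ and $g\in\mathscr H^{n-1}$, $$\big|[b,\mathcal C_\eta]f(g)-[b,\mathcal C]f(g)\big|\le C\eta\,\|\nabla_H b\|_{L^\infty(\mathscr H^{n-1})}\,\mathcal M f(g).$$
   Context: $\mathscr H^{n-1}$ ($n\ge2$) is $\mathbb R^3\times\mathbb R^{4(n-1)}$ with points $(t,y)$, $t=(t_1,t_2,t_3)$, $y=(y_1,\dots,y_{4n-4})$, and group law $(t,y)\cdot(t',y')=\big(t_\alpha+t'_\alpha+2\sum_{l}\sum_{j,k=1}^4b^\alpha_{kj}y_{4l+k}y'_{4l+j},\,y+y'\big)_{\alpha=1,2,3}$, where $b^1,b^2,b^3$ are the $4\times4$ matrices with rows $b^1=((0,1,0,0),(-1,0,0,0),(0,0,0,-1),(0,0,1,0))$, $b^2=((0,0,1,0),(0,0,0,1),(-1,0,0,0),(0,-1,0,0))$, $b^3=((0,0,0,1),(0,0,-1,0),(0,1,0,0),(-1,0,0,0))$ (this is the quaternionic Heisenberg group law $(t+t'+2\operatorname{Im}\langle y,y'\rangle,y+y')$). Norm $\|(t,y)\|=(|y|^4+|t|^2)^{1/4}$, quasi-distance $\rho(g,h)=\|h^{-1}\cdot g\|$, balls $B(g,r)$, $Q=4n+2$. Left-invariant horizontal fields $Y_{4l+j}=\partial_{y_{4l+j}}+2\sum_{\alpha=1}^3\sum_{k=1}^4b^\alpha_{kj}y_{4l+k}\partial_{t_\alpha}$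 ($l=0,\dots,n-2$, $j=1,\dots,4$) and $\nabla_H=(Y_1,\dots,Y_{4n-4})$. Cauchy--Szeg\"o kernel: $K(g,h)=K(h^{-1}\cdot g)$ with $K(t,y)=s(|y|^2+t_1{\bf i}+t_2{\bf j}+t_3{\bf k})$, $s(\sigma)=c_{n-1}\partial_{x_1}^{2(n-1)}(\bar\sigma/|\sigma|^4)$ for quaternions $\sigma=x_1+x_2{\bf i}+x_3{\bf j}+x_4{\bf k}$, with $c_{n-1}$ the real constant making this the Cauchy--Szeg\"o kernel; $\mathcal C f(g)=\mathrm{p.v.}\int K(g,u)f(u)\,du$ and $[b,\mathcal C]f(g)=\int(b(g)-b(u))K(g,u)f(u)\,du$. Fix $\varphi\in C^\infty(\mathbb R)$ with $\varphi\equiv0$ on $(-\infty,1/2)$, $0\le\varphi\le1$ on $[1/2,1]$, $\varphi\equiv1$ on $(1,\infty)$; $K_\eta(g,u)=K(g,u)\varphi(\rho(g,u)/\eta)$, $[b,\mathcal C_\eta]f(g)=\int(b(g)-b(u))K_\eta(g,u)f(u)\,du$. $\mathcal M$ is the Hardy--Littlewood maximal operator over balls containing $g$. *)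

theory Defs
  imports "HOL-Analysis.Analysis"
begin

text \<open>Quaternions are modelled as real^4, components 1,2,3,4 = real, i, j, k parts.\<close>

definition qmult :: "real^4 \<Rightarrow> real^4 \<Rightarrow> real^4" where
  "qmult a b = vector
     [a$1*b$1 - a$2*b$2 - a$3*b$3 - a$4*b$4,
      a$1*b$2 + a$2*b$1 + a$3*b$4 - a$4*b$3,
      a$1*b$3 - a$2*b$4 + a$3*b$1 + a$4*b$2,
      a$1*b$4 + a$2*b$3 - a$3*b$2 + a$4*b$1]"

definition qconj :: "real^4 \<Rightarrow> real^4" where
  "qconj a = vector [a$1, - a$2, - a$3, - a$4]"

text \<open>Points of the quaternionic Heisenberg group H^{n-1}: (t,y) with t in R^3 and
  y = (y_l)_{l} with y_l in R^4, l ranging over the finite type 'm with CARD('m) = n - 1.\<close>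

type_synonym 'm hpt = "(real^3) \<times> ((real^4)^'m)"

definition bmat :: "real^4^4^3" where
  "bmat = vector
     [vector [vector [0,1,0,0], vector [-1,0,0,0], vector [0,0,0,-1], vector [0,0,1,0]],
      vector [vector [0,0,1,0], vector [0,0,0,1], vector [-1,0,0,0], vector [0,-1,0,0]],
      vector [vector [0,0,0,1], vector [0,0,-1,0], vector [0,1,0,0], vector [-1,0,0,0]]]"

definition hmult :: "'m::finite hpt \<Rightarrow> 'm hpt \<Rightarrow> 'm hpt" where
  "hmult p q =
     ((\<chi> \<alpha>. fst p $ \<alpha> + fst q $ \<alpha> + 2 * (\<Sum>l\<in>UNIV. \<Sum>k\<in>UNIV. \<Sum>j\<in>UNIV.
                bmat $ \<alpha> $ k $ j * (snd p $ l) $ k * (snd q $ l) $ j)), snd p + snd q)"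

text \<open>Group inverse (t,y)^{-1} = (-t,-y) (the bilinear form is antisymmetric).\<close>
definition hinv :: "'m::finite hpt \<Rightarrow> 'm hpt" where
  "hinv p = (- fst p, - snd p)"

definition hnorm :: "'m::finite hpt \<Rightarrow> real" where
  "hnorm p = (norm (snd p) ^ 4 + norm (fst p) ^ 2) powr (1/4)"

definition hrho :: "'m::finite hpt \<Rightarrow> 'm hpt \<Rightarrow> real" where
  "hrho g h = hnorm (hmult (hinv h) g)"

definition hball :: "'m::finite hpt \<Rightarrow> real \<Rightarrow> 'm hpt set" where
  "hball h r = {u. hrho u h < r}"

text \<open>Cauchy--Szego kernel. c is the normalising real constant c_{n-1}; m = n-1.\<close>

definition qderiv_iter :: "nat \<Rightarrow> (real \<Rightarrow> real^4) \<Rightarrow> real \<Rightarrow> real^4" where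
  "qderiv_iter k F = ((\<lambda>G x. vector_derivative G (at x)) ^^ k) F"

definition szego_s :: "real \<Rightarrow> nat \<Rightarrow> real^4 \<Rightarrow> real^4" where
  "szego_s c m \<sigma> = c *\<^sub>R qderiv_iter (2*m)
      (\<lambda>x. let q = \<sigma> + (x - \<sigma>$1) *\<^sub>R axis 1 1 in (1 / norm q ^ 4) *\<^sub>R qconj q) (\<sigma>$1)"

definition szego_K :: "real \<Rightarrow> 'm::finite hpt \<Rightarrow> real^4" where
  "szego_K c p =
      szego_s c CARD('m) (vector [norm (snd p) ^ 2, fst p $ 1, fst p $ 2, fst p $ 3])"

definition comm_C :: "real \<Rightarrow> ('m::finite hpt \<Rightarrow> real) \<Rightarrow> ('m hpt \<Rightarrow> real^4) \<Rightarrow> 'm hpt \<Rightarrow> real^4" where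
  "comm_C c b f g = (\<integral>u. (b g - b u) *\<^sub>R qmult (szego_K c (hmult (hinv u) g)) (f u) \<partial>lborel)"

definition comm_C_eta :: "(real \<Rightarrow> real) \<Rightarrow> real \<Rightarrow> real \<Rightarrow> ('m::finite hpt \<Rightarrow> real)
    \<Rightarrow> ('m hpt \<Rightarrow> real^4) \<Rightarrow> 'm hpt \<Rightarrow> real^4" where
  "comm_C_eta \<phi> \<eta> c b f g = (\<integral>u. (b g - b u) *\<^sub>R
      (\<phi> (hrho g u / \<eta>) *\<^sub>R qmult (szego_K c (hmult (hinv u) g)) (f u)) \<partial>lborel)"

definition maxfun :: "('m::finite hpt \<Rightarrow> real^4) \<Rightarrow> 'm hpt \<Rightarrow> ennreal" where
  "maxfun f g = (SUP hr \<in> {(h,r). 0 < r \<and> g \<in> hball h r}.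
      (\<integral>\<^sup>+ u \<in> hball (fst hr) (snd hr). ennreal (norm (f u)) \<partial>lborel)
        / emeasure lborel (hball (fst hr) (snd hr)))"

text \<open>Horizontal vector fields Y_{4l+j}, applied to a differentiable b.\<close>
definition Ydir :: "'m::finite \<Rightarrow> 4 \<Rightarrow> 'm hpt \<Rightarrow> 'm hpt" where
  "Ydir l j p =
     ((\<chi> \<alpha>. 2 * (\<Sum>k\<in>UNIV. bmat $ \<alpha> $ k $ j * (snd p $ l) $ k)), (\<chi> l'. if l' = l then axis j 1 else 0))"

definition Yfield :: "'m::finite \<Rightarrow> 4 \<Rightarrow> ('m hpt \<Rightarrow> real) \<Rightarrow> 'm hpt \<Rightarrow> real" where
  "Yfield l j b p = frechet_derivative b (at p) (Ydir l j p)"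

definition gradH_norm :: "('m::finite hpt \<Rightarrow> real) \<Rightarrow> 'm hpt \<Rightarrow> real" where
  "gradH_norm b p = sqrt (\<Sum>l\<in>UNIV. \<Sum>j\<in>UNIV. (Yfield l j b p)^2)"

definition gradH_Linf :: "('m::finite hpt \<Rightarrow> real) \<Rightarrow> real" where
  "gradH_Linf b = (SUP p. gradH_norm b p)"

text \<open>Smoothness: all iterated directional derivatives exist (hence C^infinity).\<close>
fun iter_dd :: "'a::real_normed_vector list \<Rightarrow> ('a \<Rightarrow> real) \<Rightarrow> 'a \<Rightarrow> real" where
  "iter_dd [] f = f"
| "iter_dd (v # vs) f = (\<lambda>x. frechet_derivative (iter_dd vs f) (at x) v)"

definition smooth_fun :: "('a::real_normed_vector \<Rightarrow> real) \<Rightarrow> bool" where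
  "smooth_fun f \<longleftrightarrow> (\<forall>vs x. iter_dd vs f differentiable (at x))"

definition Cc_infty :: "('a::real_normed_vector \<Rightarrow> real) \<Rightarrow> bool" where
  "Cc_infty f \<longleftrightarrow> smooth_fun f \<and> compact (closure {x. f x \<noteq> 0})"

definition L1_loc :: "('m::finite hpt \<Rightarrow> real^4) \<Rightarrow> bool" where
  "L1_loc f \<longleftrightarrow> (\<forall>K. compact K \<longrightarrow> set_integrable lborel K f)"

end

theory Submission
  imports Defs "HOL-Complex_Analysis.Complex_Analysis"
begin

(* The difference [b,C_eta]f(g) - [b,C]f(g) is the integral of
   (phi(rho/eta) - 1) (b(g) - b(u)) K(u^-1 g) f(u), which vanishes unless 0 < rho(g,u) <= eta.  First, b is Lipschitz for rho with constant 3 ||grad_H b||_inf: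
   u^-1 g = (t, y) is reached by five horizontal steps (0,y) (0,a) (0,v) (0,-a) (0,-v), the last four
   forming a commutator of size sqrt|t|/2 that produces the central part t, and along each
   horizontal step the mean value theorem bounds the change of b by |step| ||grad_H b||_inf.
   Second, |K(p)| <= A ||p||^-Q with Q = 4n + 2: the kernel is a derivative of order 2(n-1) of a
   function that extends holomorphically off the poles, so Cauchy estimates on a disc of radius
   |sigma|/2 = ||p||^2/2 apply.  Third, balls of radius r have measure <= C r^Q.  Hence the integrand
   is bounded by 3 A ||grad_H b||_inf rho^(1-Q) |f(u)|, and summing over the dyadic annuli
   rho ~ 2^-j eta gives a geometric series of averages of |f|, each bounded by M f(g). *)

section \<open>The group law and the gauge norm\<close>

lemma vector_4_nth [simp]:
  "(vector [x, y, z, w] :: ('a::zero)^4) $ 1 = x"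
  "(vector [x, y, z, w] :: ('a::zero)^4) $ 2 = y"
  "(vector [x, y, z, w] :: ('a::zero)^4) $ 3 = z"
  "(vector [x, y, z, w] :: ('a::zero)^4) $ 4 = w"
  unfolding vector_def by simp_all

definition heis_form :: "(real^4)^'m::finite \<Rightarrow> (real^4)^'m \<Rightarrow> real^3" where
  "heis_form y z = (\<chi> \<alpha>. \<Sum>l\<in>UNIV. \<Sum>k\<in>UNIV. \<Sum>j\<in>UNIV. bmat $ \<alpha> $ k $ j * y $ l $ k * z $ l $ j)"

lemma bilinear_heis_form: "bilinear heis_form"
  unfolding bilinear_def
  by (auto intro!: linearI simp: heis_form_def vec_eq_iff algebra_simps sum.distrib sum_distrib_left)

lemmas heis_form_add_left = bilinear_ladd[OF bilinear_heis_form]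
  and heis_form_add_right = bilinear_radd[OF bilinear_heis_form]
  and heis_form_diff_right = bilinear_rsub[OF bilinear_heis_form]
  and heis_form_scaleR_left = bilinear_lmul[OF bilinear_heis_form]
  and heis_form_scaleR_right = bilinear_rmul[OF bilinear_heis_form]
  and heis_form_minus_left = bilinear_lneg[OF bilinear_heis_form]
  and heis_form_minus_right = bilinear_rneg[OF bilinear_heis_form]
  and heis_form_zero_right [simp] = bilinear_rzero[OF bilinear_heis_form]

lemma heis_form_antisym: "heis_form y z = - heis_form z y"
  unfolding heis_form_def vec_eq_iff forall_3
  by (simp add: sum_4 bmat_def sum_negf[symmetric] algebra_simps)

lemma heis_form_self [simp]: "heis_form y y = 0"
  using heis_form_antisym[of y y] by (simp add: vec_eq_iff)

lemma hmult_eq: "hmult p q = (fst p + fst q + 2 *\<^sub>R heis_form (snd p) (snd q), snd p + snd q)"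
  by (simp add: hmult_def heis_form_def vec_eq_iff)

lemma hmult_assoc: "hmult (hmult p q) r = hmult p (hmult q r)"
  by (simp add: hmult_eq heis_form_add_left heis_form_add_right scaleR_add_right add_ac)

lemma hinv_hmult_eq:
  "hmult (hinv p) g = (fst g - fst p - 2 *\<^sub>R heis_form (snd p) (snd g), snd g - snd p)"
  by (simp add: hmult_eq hinv_def heis_form_minus_left)

lemma hmult_hinv_cancel: "hmult p (hmult (hinv p) g) = g"
  unfolding hinv_hmult_eq by (simp add: hmult_eq heis_form_diff_right)

lemma hinv_hmult_swap: "hmult (hinv u) g = hinv (hmult (hinv g) u)"
  using heis_form_antisym[of "snd g" "snd u"]
  by (simp add: hmult_eq hinv_def heis_form_minus_left heis_form_minus_right algebra_simps)

lemma hnorm_hinv: "hnorm (hinv p) = hnorm p"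
  by (simp add: hnorm_def hinv_def)

lemma hrho_commute: "hrho g u = hrho u g"
  unfolding hrho_def by (metis hinv_hmult_swap hnorm_hinv)

lemma hrho_refl: "hrho g g = 0"
  by (simp add: hrho_def hinv_hmult_eq hnorm_def)

lemma hnorm_nonneg: "0 \<le> hnorm p"
  by (simp add: hnorm_def)

lemma hnorm_power4: "hnorm p ^ 4 = norm (snd p) ^ 4 + (norm (fst p))\<^sup>2"
proof (cases "norm (snd p) ^ 4 + (norm (fst p))\<^sup>2 = 0")
  case False
  then have "0 < norm (snd p) ^ 4 + (norm (fst p))\<^sup>2"
    by (simp add: order_less_le)
  then show ?thesis
    by (simp add: hnorm_def powr_realpow[symmetric] powr_powr)
qed (simp add: hnorm_def)

lemma hnorm_power2: "(hnorm p)\<^sup>2 = sqrt (norm (snd p) ^ 4 + (norm (fst p))\<^sup>2)"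
  by (metis hnorm_power4 power_mult[of _ 2 2] num_double numeral_times_numeral
      real_sqrt_abs abs_of_nonneg zero_le_power2)

lemma norm_snd_le_hnorm: "norm (snd p) \<le> hnorm p"
  using power_mono_iff[of "norm (snd p)" "hnorm p" 4] by (simp add: hnorm_power4 hnorm_nonneg)

lemma sqrt_norm_fst_le_hnorm: "sqrt (norm (fst p)) \<le> hnorm p"
proof -
  have "sqrt (norm (fst p)) ^ 4 = (norm (fst p))\<^sup>2"
    using power_mult[of "sqrt (norm (fst p))" 2 2] by simp
  then have "sqrt (norm (fst p)) ^ 4 \<le> hnorm p ^ 4"
    by (simp add: hnorm_power4)
  then show ?thesis
    using power_mono_iff[of "sqrt (norm (fst p))" "hnorm p" 4] by (simp add: hnorm_nonneg)
qed

lemma continuous_on_hnorm: "continuous_on UNIV hnorm"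
  unfolding hnorm_def[abs_def]
  by (intro continuous_on_powr' continuous_intros) auto

lemma continuous_on_hmult_hinv: "continuous_on UNIV (\<lambda>u. hmult (hinv g) u)"
  unfolding hmult_def hinv_def
  by (intro continuous_intros continuous_on_vec_lambda)

lemma continuous_on_hrho: "continuous_on UNIV (\<lambda>u. hrho u g)"
  unfolding hrho_def
  by (rule continuous_on_compose2[OF continuous_on_hnorm continuous_on_hmult_hinv]) auto

lemma open_hball: "open (hball g r)"
  unfolding hball_def
  by (rule open_Collect_less[OF continuous_on_hrho continuous_on_const])

section \<open>The horizontal gradient\<close>

lemma smooth_fun_differentiable: "smooth_fun b \<Longrightarrow> b differentiable (at x)"
  unfolding smooth_fun_def by (metis iter_dd.simps(1))

lemma smooth_fun_continuous_on: "smooth_fun b \<Longrightarrow> continuous_on UNIV b"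
  by (simp add: continuous_on_eq_continuous_at differentiable_imp_continuous_within
      smooth_fun_differentiable)

lemma smooth_fun_continuous_on_frechet_derivative:
  assumes "smooth_fun b"
  shows "continuous_on UNIV (\<lambda>x. frechet_derivative b (at x) v)"
proof -
  have "iter_dd [v] b differentiable (at x)" for x
    using assms unfolding smooth_fun_def by blast
  then show ?thesis
    by (simp add: continuous_on_eq_continuous_at differentiable_imp_continuous_within)
qed

lemma smooth_fun_linear_frechet_derivative:
  "smooth_fun b \<Longrightarrow> linear (frechet_derivative b (at x))"
  by (rule linear_frechet_derivative[OF smooth_fun_differentiable])

lemma Ydir_eq_sum:
  "Ydir l j p = (0, \<chi> l'. if l' = l then axis j 1 else 0) +
     (\<Sum>\<alpha>\<in>UNIV. (2 * (\<Sum>k\<in>UNIV. bmat $ \<alpha> $ k $ j * snd p $ l $ k)) *\<^sub>R (axis \<alpha> 1, 0))"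
  by (simp add: Ydir_def vec_eq_iff fst_sum snd_sum axis_def prod_eq_iff if_distrib cong: if_cong)

lemma smooth_fun_continuous_on_Yfield:
  assumes "smooth_fun b"
  shows "continuous_on UNIV (Yfield l j b)"
proof -
  have eq: "Yfield l j b p = frechet_derivative b (at p) (0, \<chi> l'. if l' = l then axis j 1 else 0) +
     (\<Sum>\<alpha>\<in>UNIV. (2 * (\<Sum>k\<in>UNIV. bmat $ \<alpha> $ k $ j * snd p $ l $ k)) *
        frechet_derivative b (at p) (axis \<alpha> 1, 0))" for p
    using smooth_fun_linear_frechet_derivative[OF assms, of p] unfolding Yfield_def Ydir_eq_sum
    by (simp only: linear_add linear_sum linear_scale o_def real_scaleR_def)
  show ?thesis
    unfolding continuous_on_cong[OF refl eq]
    by (intro continuous_intros smooth_fun_continuous_on_frechet_derivative assms)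
qed

lemma gradH_norm_nonneg: "0 \<le> gradH_norm b p"
  by (simp add: gradH_norm_def sum_nonneg)

lemma gradH_norm_eq_0_outside_support:
  assumes "smooth_fun b" "p \<notin> closure {x. b x \<noteq> 0}"
  shows "gradH_norm b p = 0"
proof -
  have "frechet_derivative b (at p) = frechet_derivative (\<lambda>x. 0::real) (at p)"
    by (rule frechet_derivative_transform_within_open[of b p "- closure {x. b x \<noteq> 0}"])
      (use assms smooth_fun_differentiable closure_subset[of "{x. b x \<noteq> 0}"] in auto)
  then show ?thesis
    by (simp add: gradH_norm_def Yfield_def)
qed

lemma Cc_infty_bdd_above_gradH_norm:
  assumes "Cc_infty b"
  shows "bdd_above (range (gradH_norm b))"
proof -
  let ?K = "closure {x. b x \<noteq> 0}"
  have smooth: "smooth_fun b" and "compact ?K"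
    using assms by (auto simp: Cc_infty_def)
  have cont: "continuous_on UNIV (gradH_norm b)"
    unfolding gradH_norm_def[abs_def]
    by (intro continuous_intros smooth_fun_continuous_on_Yfield smooth)
  have "bounded (gradH_norm b ` ?K)"
    by (intro compact_imp_bounded compact_continuous_image
        continuous_on_subset[OF cont] \<open>compact ?K\<close>) auto
  then obtain M where M: "\<And>p. p \<in> ?K \<Longrightarrow> gradH_norm b p \<le> M"
    unfolding bounded_real by (meson abs_le_D1 image_eqI)
  have "gradH_norm b p \<le> max M 0" for p
    using M[of p] gradH_norm_eq_0_outside_support[OF smooth, of p] by (cases "p \<in> ?K") auto
  then show ?thesis
    by (intro bdd_aboveI[of _ "max M 0"]) blast
qed

lemma gradH_norm_le_Linf: "Cc_infty b \<Longrightarrow> gradH_norm b p \<le> gradH_Linf b"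
  unfolding gradH_Linf_def by (rule cSUP_upper[OF _ Cc_infty_bdd_above_gradH_norm]) auto

lemma gradH_Linf_nonneg: "Cc_infty b \<Longrightarrow> 0 \<le> gradH_Linf b"
  using gradH_norm_le_Linf gradH_norm_nonneg order_trans by blast

lemma horizontal_vector_eq_sum_Ydir:
  fixes q :: "'m::finite hpt"
  shows "(2 *\<^sub>R heis_form (snd q) w, w) = (\<Sum>l\<in>UNIV. \<Sum>j\<in>UNIV. w $ l $ j *\<^sub>R Ydir l j q)"
proof -
  have "fst (\<Sum>l\<in>UNIV. \<Sum>j\<in>UNIV. w $ l $ j *\<^sub>R Ydir l j q) = 2 *\<^sub>R heis_form (snd q) w"
    by (simp add: fst_sum Ydir_def heis_form_def vec_eq_iff sum_distrib_left sum_distrib_right)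
      (rule allI, rule sum.cong[OF refl], subst sum.swap, simp add: algebra_simps)
  moreover have "snd (\<Sum>l\<in>UNIV. \<Sum>j\<in>UNIV. w $ l $ j *\<^sub>R Ydir l j q) = w"
  proof -
    have unit: "(\<chi> l'. if l' = l then axis j 1 else 0) $ i $ k = (if i = l then if k = j then 1 else 0 else 0)"
      for l i :: 'm and j k :: 4
      by (simp add: axis_def)
    have "(\<Sum>l\<in>UNIV. \<Sum>j\<in>UNIV. w $ l $ j * (\<chi> l'. if l' = l then axis j 1 else 0) $ i $ k)
        = (\<Sum>l\<in>UNIV. if i = l then (\<Sum>j\<in>UNIV. if k = j then w $ l $ j else 0) else 0)" for i k
      unfolding unit by (intro sum.cong refl) (auto simp: if_distrib[of "\<lambda>x. _ * x"] cong: if_cong)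
    then show ?thesis
      by (simp add: snd_sum Ydir_def vec_eq_iff)
  qed
  ultimately show ?thesis
    by (simp add: prod_eq_iff)
qed

lemma frechet_derivative_horizontal:
  assumes "smooth_fun b"
  shows "frechet_derivative b (at q) (2 *\<^sub>R heis_form (snd q) w, w)
    = w \<bullet> (\<chi> l j. Yfield l j b q)"
  using smooth_fun_linear_frechet_derivative[OF assms, of q]
  by (simp add: horizontal_vector_eq_sum_Ydir linear_sum linear_scale inner_vec_def Yfield_def)

lemma norm_Yfield_vec: "norm (\<chi> l j. Yfield l j b q) = gradH_norm b q"
  by (simp add: norm_vec_def L2_set_def gradH_norm_def sum_nonneg real_sqrt_pow2)

lemma Cc_infty_horizontal_increment_le:
  assumes "Cc_infty b"
  shows "\<bar>b (hmult p (0, w)) - b p\<bar> \<le> norm w * gradH_Linf b"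
proof -
  have smooth: "smooth_fun b"
    using assms by (simp add: Cc_infty_def)
  define D where "D = (2 *\<^sub>R heis_form (snd p) w, w)"
  have "DERIV (\<lambda>s. b (p + s *\<^sub>R D)) s :> frechet_derivative b (at (p + s *\<^sub>R D)) D" for s
  proof -
    have "(b has_derivative frechet_derivative b (at (p + s *\<^sub>R D))) (at (p + s *\<^sub>R D))"
      using smooth_fun_differentiable[OF smooth] frechet_derivative_works by blast
    then have "((\<lambda>s. b (p + s *\<^sub>R D)) has_derivative
        (\<lambda>h. frechet_derivative b (at (p + s *\<^sub>R D)) (h *\<^sub>R D))) (at s)"
      by (rule has_derivative_compose[where f = "\<lambda>s. p + s *\<^sub>R D", rotated])
        (auto intro!: derivative_eq_intros)
    moreover have "(\<lambda>h. frechet_derivative b (at (p + s *\<^sub>R D)) (h *\<^sub>R D))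
        = (\<lambda>h. frechet_derivative b (at (p + s *\<^sub>R D)) D * h)"
      using smooth_fun_linear_frechet_derivative[OF smooth] by (simp add: linear_scale mult.commute)
    ultimately show ?thesis
      by (simp add: has_field_derivative_def)
  qed
  from MVT2[OF zero_less_one this] obtain z
    where z: "b (p + D) - b p = frechet_derivative b (at (p + z *\<^sub>R D)) D"
    by auto
  define q where "q = p + z *\<^sub>R D"
  have "D = (2 *\<^sub>R heis_form (snd q) w, w)"
    by (simp add: q_def D_def heis_form_add_left heis_form_scaleR_left)
  then have "\<bar>frechet_derivative b (at q) D\<bar> = \<bar>w \<bullet> (\<chi> l j. Yfield l j b q)\<bar>"
    by (simp only: frechet_derivative_horizontal[OF smooth])
  also have "\<dots> \<le> norm w * gradH_norm b q"
    using Cauchy_Schwarz_ineq2 norm_Yfield_vec by metis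
  also have "\<dots> \<le> norm w * gradH_Linf b"
    by (simp add: gradH_norm_le_Linf[OF assms] mult_left_mono)
  finally show ?thesis
    using z by (simp add: q_def D_def hmult_eq plus_prod_def)
qed

section \<open>Lipschitz continuity for the gauge distance\<close>

definition block_vec :: "'m::finite \<Rightarrow> real^4 \<Rightarrow> (real^4)^'m" where
  "block_vec l0 q = (\<chi> l. if l = l0 then q else 0)"

lemma norm_block_vec: "norm (block_vec l0 q) = norm q"
proof -
  have "(\<Sum>l\<in>UNIV. (norm (block_vec l0 q $ l))\<^sup>2) = (norm q)\<^sup>2"
    by (simp add: block_vec_def if_distrib[of "\<lambda>x. (norm x)\<^sup>2"] cong: if_cong)
  then show ?thesis
    by (subst norm_vec_def) (simp add: L2_set_def)
qed

lemma heis_form_block_vec: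
  "heis_form (block_vec l0 (vector [x, 0, 0, 0])) (block_vec l0 (vector [0, p, q, r]))
    = x *\<^sub>R vector [p, q, r]"
proof -
  have "(\<Sum>l\<in>UNIV. \<Sum>k\<in>UNIV. \<Sum>j\<in>UNIV. bmat $ \<alpha> $ k $ j * block_vec l0 y $ l $ k * block_vec l0 z $ l $ j)
    = (\<Sum>l\<in>UNIV. if l = l0 then \<Sum>k\<in>UNIV. \<Sum>j\<in>UNIV. bmat $ \<alpha> $ k $ j * y $ k * z $ j else 0)"
    for \<alpha> y z
    by (intro sum.cong refl) (simp add: block_vec_def)
  then show ?thesis
    by (simp add: heis_form_def vec_eq_iff forall_3 sum_4 bmat_def)
qed

lemma central_commutator:
  "hmult (0, y) (hmult (0, a) (hmult (0, v) (hmult (0, - a) (0, - v)))) = (4 *\<^sub>R heis_form a v, y)"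
  using heis_form_antisym[of v a]
  by (simp add: hmult_eq heis_form_minus_left heis_form_minus_right heis_form_add_right
      heis_form_diff_right)

lemma central_as_commutator:
  fixes t :: "real^3"
  shows "\<exists>a v :: (real^4)^'m::finite. 4 *\<^sub>R heis_form a v = t
    \<and> norm a \<le> sqrt (norm t) / 2 \<and> norm v \<le> sqrt (norm t) / 2"
proof (cases "t = 0")
  case False
  define s where "s = sqrt (norm t)"
  have s: "0 < s" "s * s = norm t"
    using False by (simp_all add: s_def)
  define a :: "(real^4)^'m" where "a = block_vec undefined (vector [s / 2, 0, 0, 0])"
  define v :: "(real^4)^'m" where
    "v = (1 / (2 * s)) *\<^sub>R block_vec undefined (vector [0, t $ 1, t $ 2, t $ 3])"
  have "4 *\<^sub>R heis_form a v = t"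
    using s unfolding a_def v_def heis_form_scaleR_right heis_form_block_vec
    by (simp add: vec_eq_iff forall_3)
  moreover have "norm a = s / 2"
    unfolding a_def norm_block_vec using s by (simp add: norm_vec_def L2_set_def sum_4)
  moreover have "norm v = s / 2"
  proof -
    have "norm (vector [0, t $ 1, t $ 2, t $ 3] :: real^4) = norm t"
      by (simp add: norm_vec_def L2_set_def sum_3 sum_4)
    then show ?thesis
      using s by (simp add: v_def norm_block_vec field_simps)
  qed
  ultimately show ?thesis
    unfolding s_def by (intro exI[of _ a] exI[of _ v]) simp
qed (auto intro!: exI[of _ 0])

lemma horizontal_path_increment_le:
  assumes "\<And>p w. \<bar>b (hmult p (0, w)) - b p\<bar> \<le> norm w * L"
  shows "\<bar>b (foldl (\<lambda>p w. hmult p (0, w)) u ws) - b u\<bar> \<le> sum_list (map norm ws) * L"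
proof (induction ws arbitrary: u)
  case (Cons w ws)
  from Cons.IH[of "hmult u (0, w)"] assms[of u w] show ?case
    by (simp add: algebra_simps)
qed simp

lemma hrho_lipschitz_of_horizontal:
  fixes b :: "'m::finite hpt \<Rightarrow> real"
  assumes step: "\<And>p w. \<bar>b (hmult p (0, w)) - b p\<bar> \<le> norm w * L" and "0 \<le> L"
  shows "\<bar>b g - b u\<bar> \<le> 3 * hrho g u * L"
proof -
  define h where "h = hmult (hinv u) g"
  obtain a v :: "(real^4)^'m" where av: "4 *\<^sub>R heis_form a v = fst h"
    and a: "norm a \<le> sqrt (norm (fst h)) / 2" and v: "norm v \<le> sqrt (norm (fst h)) / 2"
    using central_as_commutator by blast
  let ?path = "foldl (\<lambda>p w. hmult p (0, w)) u [snd h, a, v, - a, - v]"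
  have "?path = hmult u (hmult (0, snd h) (hmult (0, a) (hmult (0, v) (hmult (0, - a) (0, - v)))))"
    by (simp add: hmult_assoc)
  also have "\<dots> = hmult u h"
    by (simp add: central_commutator av)
  also have "\<dots> = g"
    by (simp add: h_def hmult_hinv_cancel)
  finally have "\<bar>b g - b u\<bar> \<le> (norm (snd h) + 2 * norm a + 2 * norm v) * L"
    using horizontal_path_increment_le[OF step, of u "[snd h, a, v, - a, - v]"] by (simp add: add.assoc)
  also have "\<dots> \<le> (norm (snd h) + 2 * sqrt (norm (fst h))) * L"
    using a v \<open>0 \<le> L\<close> by (intro mult_right_mono) auto
  also have "\<dots> \<le> 3 * hnorm h * L"
    using norm_snd_le_hnorm[of h] sqrt_norm_fst_le_hnorm[of h] \<open>0 \<le> L\<close>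
    by (intro mult_right_mono) auto
  finally show ?thesis
    by (simp add: h_def hrho_def)
qed

section \<open>Size of the Cauchy--Szego kernel\<close>

lemma has_field_derivative_Re_higher_deriv:
  assumes "F holomorphic_on S" "open S" "complex_of_real x \<in> S"
  shows "((\<lambda>x. Re ((deriv ^^ k) F (of_real x))) has_field_derivative
    Re ((deriv ^^ Suc k) F (of_real x))) (at x)"
proof -
  have "((deriv ^^ k) F has_field_derivative (deriv ^^ Suc k) F (of_real x)) (at (of_real x))"
    using holomorphic_derivI[OF holomorphic_higher_deriv[OF assms(1,2)] assms(2,3)] by simp
  then have "((\<lambda>x. (deriv ^^ k) F (of_real x)) has_vector_derivative
      (deriv ^^ Suc k) F (of_real x)) (at x)"
    by (rule has_vector_derivative_real_field)
  then show ?thesis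
    by (rule has_field_derivative_Re)
qed

lemma qderiv_iter_Suc: "qderiv_iter (Suc k) H = (\<lambda>x. vector_derivative (qderiv_iter k H) (at x))"
  by (simp add: qderiv_iter_def)

lemma qderiv_iter_Re_holomorphic:
  fixes F G :: "complex \<Rightarrow> complex"
  assumes S: "open S" and hol: "F holomorphic_on S" "G holomorphic_on S"
    and H: "\<And>x. complex_of_real x \<in> S \<Longrightarrow>
      H x = Re (F (of_real x)) *\<^sub>R a + Re (G (of_real x)) *\<^sub>R e"
    and "complex_of_real x \<in> S"
  shows "qderiv_iter k H x
    = Re ((deriv ^^ k) F (of_real x)) *\<^sub>R a + Re ((deriv ^^ k) G (of_real x)) *\<^sub>R e"
  using \<open>complex_of_real x \<in> S\<close>
proof (induction k arbitrary: x)
  case 0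
  then show ?case
    by (simp add: qderiv_iter_def H)
next
  case (Suc k)
  have "((\<lambda>x. Re ((deriv ^^ k) F (of_real x)) *\<^sub>R a + Re ((deriv ^^ k) G (of_real x)) *\<^sub>R e)
      has_vector_derivative
      Re ((deriv ^^ Suc k) F (of_real x)) *\<^sub>R a + Re ((deriv ^^ Suc k) G (of_real x)) *\<^sub>R e) (at x)"
    using has_vector_derivative_add[OF
        has_vector_derivative_scaleR[OF has_field_derivative_Re_higher_deriv[OF hol(1) S Suc.prems]
          has_vector_derivative_const]
        has_vector_derivative_scaleR[OF has_field_derivative_Re_higher_deriv[OF hol(2) S Suc.prems]
          has_vector_derivative_const]]
    by simp
  moreover have "open (complex_of_real -` S)"
    by (intro continuous_open_vimage S continuous_intros)
  ultimately have "(qderiv_iter k H has_vector_derivative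
      Re ((deriv ^^ Suc k) F (of_real x)) *\<^sub>R a + Re ((deriv ^^ Suc k) G (of_real x)) *\<^sub>R e) (at x)"
    by (rule has_vector_derivative_transform_within_open) (use Suc in auto)
  then show ?case
    by (simp add: qderiv_iter_Suc vector_derivative_at)
qed

text \<open>The disc of radius \<open>s/2\<close> around \<open>x0\<close>, with \<open>s = |x0 \<plusminus> \<i>\<surd>r|\<close>, stays at distance
  \<open>s/2\<close> from both poles \<open>\<plusminus>\<i>\<surd>r\<close> of \<open>1/(z\<^sup>2 + r)\<close>.\<close>

lemma norm_power2_add_of_real_ge:
  fixes z :: complex and x0 r :: real
  assumes "0 \<le> r" "norm (z - of_real x0) \<le> sqrt (x0\<^sup>2 + r) / 2"
  shows "(x0\<^sup>2 + r) / 4 \<le> norm (z\<^sup>2 + of_real r)"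
proof -
  define s where "s = sqrt (x0\<^sup>2 + r)"
  define w where "w = \<i> * of_real (sqrt r)"
  have factor: "z\<^sup>2 + of_real r = (z - w) * (z + w)"
    using assms(1) by (simp add: w_def algebra_simps power2_eq_square flip: of_real_mult)
  have "norm (of_real x0 - w) = s" "norm (of_real x0 + w) = s"
    using assms(1) by (simp_all add: s_def w_def cmod_def)
  then have "s / 2 \<le> norm (z - w)" "s / 2 \<le> norm (z + w)"
    using assms(2) norm_triangle_sub[of "of_real x0 - w" "z - w"]
      norm_triangle_sub[of "of_real x0 + w" "z + w"]
    by (simp_all add: s_def norm_minus_commute)
  then have "(s / 2) * (s / 2) \<le> norm (z - w) * norm (z + w)"
    using assms(1) by (intro mult_mono) (auto simp: s_def add_nonneg_nonneg)
  then show ?thesis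
    using assms(1) by (simp add: factor norm_mult s_def)
qed

lemma norm_szego_rational_on_circle:
  fixes z :: complex and x0 r :: real
  assumes "0 \<le> r" "0 < x0\<^sup>2 + r"
    and z: "norm (of_real x0 - z) = sqrt (x0\<^sup>2 + r) / 2"
  defines "s \<equiv> sqrt (x0\<^sup>2 + r)"
  shows "norm (1 / (z\<^sup>2 + of_real r)\<^sup>2) \<le> 16 / s ^ 4"
    and "norm (z / (z\<^sup>2 + of_real r)\<^sup>2) \<le> 24 / s ^ 3"
proof -
  have s: "0 < s" "s\<^sup>2 = x0\<^sup>2 + r"
    using assms(1,2) by (simp_all add: s_def)
  have "s\<^sup>2 / 4 \<le> norm (z\<^sup>2 + of_real r)" "0 < s\<^sup>2 / 4"
    using norm_power2_add_of_real_ge[OF assms(1), of z x0] z s by (simp_all add: s_def norm_minus_commute)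
  then have "1 / (norm (z\<^sup>2 + of_real r))\<^sup>2 \<le> 1 / (s\<^sup>2 / 4)\<^sup>2"
    by (intro divide_left_mono power_mono mult_pos_pos) auto
  then show F: "norm (1 / (z\<^sup>2 + of_real r)\<^sup>2) \<le> 16 / s ^ 4"
    by (simp add: norm_divide norm_power norm_mult power2_eq_square power4_eq_xxxx mult.assoc)
  have "norm z \<le> 3 * s / 2"
    using z norm_triangle_sub[of z "of_real x0"] real_sqrt_le_iff[of "x0\<^sup>2" "x0\<^sup>2 + r"] assms(1)
    by (auto simp: s_def norm_minus_commute)
  then have "norm z * norm (1 / (z\<^sup>2 + of_real r)\<^sup>2) \<le> (3 * s / 2) * (16 / s ^ 4)"
    using F s(1) by (intro mult_mono) auto
  then show "norm (z / (z\<^sup>2 + of_real r)\<^sup>2) \<le> 24 / s ^ 3"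
    using s(1) by (simp add: norm_divide field_simps power3_eq_cube power4_eq_xxxx)
qed

lemma norm_higher_deriv_szego_le:
  fixes x0 r :: real
  assumes "0 \<le> r" "0 < x0\<^sup>2 + r"
  defines "s \<equiv> sqrt (x0\<^sup>2 + r)"
  shows "norm ((deriv ^^ k) (\<lambda>z::complex. 1 / (z\<^sup>2 + of_real r)\<^sup>2) (of_real x0)) \<le> fact k * (16 / s ^ 4) / (s / 2) ^ k"
    and "norm ((deriv ^^ k) (\<lambda>z::complex. z / (z\<^sup>2 + of_real r)\<^sup>2) (of_real x0)) \<le> fact k * (24 / s ^ 3) / (s / 2) ^ k"
proof -
  let ?S = "{z :: complex. z\<^sup>2 + of_real r \<noteq> 0}"
  have s: "0 < s / 2"
    using assms by (simp add: s_def)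
  have "cball (of_real x0) (s / 2) \<subseteq> ?S"
  proof
    fix z :: complex assume "z \<in> cball (of_real x0) (s / 2)"
    then have "(x0\<^sup>2 + r) / 4 \<le> norm (z\<^sup>2 + of_real r)"
      using norm_power2_add_of_real_ge[OF assms(1), of z x0] by (simp add: s_def dist_norm norm_minus_commute)
    then show "z \<in> ?S"
      using assms(2) by auto
  qed
  moreover have "open ?S"
    by (intro open_Collect_neq continuous_intros)
  ultimately have hol: "f holomorphic_on ball (of_real x0) (s / 2)"
    and cont: "continuous_on (cball (of_real x0) (s / 2)) f"
    if "f holomorphic_on ?S" for f
    using that ball_subset_cball holomorphic_on_subset holomorphic_on_imp_continuous_on by blast+
  have holF: "(\<lambda>z::complex. 1 / (z\<^sup>2 + of_real r)\<^sup>2) holomorphic_on ?S"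
    and holG: "(\<lambda>z::complex. z / (z\<^sup>2 + of_real r)\<^sup>2) holomorphic_on ?S"
    by (auto intro!: holomorphic_intros)
  note circle = norm_szego_rational_on_circle[OF assms(1,2), folded s_def]
  from Cauchy_inequality[OF hol[OF holF] cont[OF holF] s circle(1)]
    Cauchy_inequality[OF hol[OF holG] cont[OF holG] s circle(2)]
  show "norm ((deriv ^^ k) (\<lambda>z::complex. 1 / (z\<^sup>2 + of_real r)\<^sup>2) (of_real x0)) \<le> fact k * (16 / s ^ 4) / (s / 2) ^ k"
    "norm ((deriv ^^ k) (\<lambda>z::complex. z / (z\<^sup>2 + of_real r)\<^sup>2) (of_real x0)) \<le> fact k * (24 / s ^ 3) / (s / 2) ^ k"
    by simp_all
qed

definition szego_profile :: "real^4 \<Rightarrow> real \<Rightarrow> real^4" where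
  "szego_profile \<sigma> x = (let q = \<sigma> + (x - \<sigma> $ 1) *\<^sub>R axis 1 1 in (1 / norm q ^ 4) *\<^sub>R qconj q)"

lemma szego_profile_eq:
  fixes \<sigma> :: "real^4" and x :: real
  defines "r \<equiv> (\<sigma> $ 2)\<^sup>2 + (\<sigma> $ 3)\<^sup>2 + (\<sigma> $ 4)\<^sup>2"
  shows "szego_profile \<sigma> x = Re (of_real x / ((of_real x)\<^sup>2 + of_real r)\<^sup>2) *\<^sub>R axis 1 1
    + Re (1 / ((of_real x)\<^sup>2 + of_real r)\<^sup>2) *\<^sub>R vector [0, - \<sigma> $ 2, - \<sigma> $ 3, - \<sigma> $ 4]"
proof -
  define q where "q = \<sigma> + (x - \<sigma> $ 1) *\<^sub>R axis 1 (1::real)"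
  have q: "q $ 1 = x" "q $ 2 = \<sigma> $ 2" "q $ 3 = \<sigma> $ 3" "q $ 4 = \<sigma> $ 4"
    by (simp_all add: q_def axis_def)
  have "(norm q)\<^sup>2 = x\<^sup>2 + r"
    unfolding power2_norm_eq_inner inner_vec_def sum_4 by (simp add: q r_def power2_eq_square)
  then have "norm q ^ 4 = (x\<^sup>2 + r)\<^sup>2"
    by (metis power_mult[of "norm q" 2 2] num_double numeral_times_numeral)
  moreover have "(complex_of_real x)\<^sup>2 + of_real r = of_real (x\<^sup>2 + r)"
    by simp
  ultimately show ?thesis
    unfolding szego_profile_def Let_def q_def[symmetric] vec_eq_iff forall_4
    by (simp add: qconj_def q axis_def Re_divide_of_real flip: of_real_power)
qed

lemma norm_qderiv_iter_szego_profile_le: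
  fixes \<sigma> :: "real^4"
  assumes "0 < norm \<sigma>"
  shows "norm (qderiv_iter k (szego_profile \<sigma>) (\<sigma> $ 1)) \<le> fact k * 40 / norm \<sigma> ^ 3 / (norm \<sigma> / 2) ^ k"
proof -
  define r where "r = (\<sigma> $ 2)\<^sup>2 + (\<sigma> $ 3)\<^sup>2 + (\<sigma> $ 4)\<^sup>2"
  define e :: "real^4" where "e = vector [0, - \<sigma> $ 2, - \<sigma> $ 3, - \<sigma> $ 4]"
  define s where "s = norm \<sigma>"
  define D where "D f = (deriv ^^ k) f (complex_of_real (\<sigma> $ 1))" for f
  have r: "0 \<le> r" "s = sqrt ((\<sigma> $ 1)\<^sup>2 + r)" "norm e = sqrt r"
    by (simp_all add: r_def s_def e_def norm_vec_def L2_set_def sum_4 add.assoc)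
  have pos: "0 < (\<sigma> $ 1)\<^sup>2 + r"
    using assms r(2) real_sqrt_gt_0_iff by (metis s_def)
  note Cauchy = norm_higher_deriv_szego_le[OF r(1) pos, of k, folded r(2)]
  have x0: "complex_of_real (\<sigma> $ 1) \<in> {z. z\<^sup>2 + of_real r \<noteq> 0}"
    using pos by (simp flip: of_real_power of_real_add)
  have "qderiv_iter k (szego_profile \<sigma>) (\<sigma> $ 1)
    = Re (D (\<lambda>z. z / (z\<^sup>2 + of_real r)\<^sup>2)) *\<^sub>R axis 1 1 + Re (D (\<lambda>z. 1 / (z\<^sup>2 + of_real r)\<^sup>2)) *\<^sub>R e"
    unfolding D_def
    by (rule qderiv_iter_Re_holomorphic[where S = "{z. z\<^sup>2 + of_real r \<noteq> 0}"])
      (use x0 in \<open>auto simp: szego_profile_eq r_def e_def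
        intro!: holomorphic_intros open_Collect_neq continuous_intros\<close>)
  also have "norm \<dots> \<le> norm (D (\<lambda>z. z / (z\<^sup>2 + of_real r)\<^sup>2)) + norm (D (\<lambda>z. 1 / (z\<^sup>2 + of_real r)\<^sup>2)) * s"
    using r abs_Re_le_cmod
    by (intro order.trans[OF norm_triangle_ineq] add_mono) (auto simp: real_sqrt_le_iff intro!: mult_mono)
  also have "\<dots> \<le> fact k * (24 / s ^ 3) / (s / 2) ^ k + fact k * (16 / s ^ 4) / (s / 2) ^ k * s"
    using Cauchy assms by (intro add_mono mult_right_mono) (auto simp: D_def s_def)
  also have "\<dots> = fact k * 40 / s ^ 3 / (s / 2) ^ k"
    using assms by (simp add: s_def field_simps power3_eq_cube power4_eq_xxxx)
  finally show ?thesis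
    by (simp add: s_def)
qed

lemma norm_szego_K_le:
  fixes p :: "'m::finite hpt"
  assumes "0 < hnorm p"
  shows "norm (szego_K c p)
    \<le> \<bar>c\<bar> * fact (2 * CARD('m)) * 40 * 4 ^ CARD('m) / hnorm p ^ (6 + 4 * CARD('m))"
proof -
  define \<sigma> :: "real^4" where "\<sigma> = vector [norm (snd p) ^ 2, fst p $ 1, fst p $ 2, fst p $ 3]"
  have "norm \<sigma> = (hnorm p)\<^sup>2"
    by (simp add: \<sigma>_def hnorm_power2 norm_vec_def L2_set_def sum_3 sum_4 add.assoc
        flip: power_mult)
  then have s: "0 < norm \<sigma>" "norm \<sigma> ^ (3 + 2 * CARD('m)) = hnorm p ^ (6 + 4 * CARD('m))"
    using assms by (simp_all flip: power_mult)
  have "norm (szego_K c p) = \<bar>c\<bar> * norm (qderiv_iter (2 * CARD('m)) (szego_profile \<sigma>) (\<sigma> $ 1))"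
    by (simp add: szego_K_def szego_s_def szego_profile_def[abs_def] \<sigma>_def)
  also have "\<dots> \<le> \<bar>c\<bar> * (fact (2 * CARD('m)) * 40 / norm \<sigma> ^ 3 / (norm \<sigma> / 2) ^ (2 * CARD('m)))"
    by (intro mult_left_mono norm_qderiv_iter_szego_profile_le s(1)) simp
  also have "\<dots> = \<bar>c\<bar> * fact (2 * CARD('m)) * 40 * 4 ^ CARD('m) / norm \<sigma> ^ (3 + 2 * CARD('m))"
    using s by (simp add: field_simps power_add power_divide power_mult power2_eq_square
        flip: power_mult_distrib)
  finally show ?thesis
    by (simp only: s(2))
qed

section \<open>Measure of gauge balls and the maximal function\<close>

lemma emeasure_lborel_ball_le:
  fixes c :: "'a::euclidean_space"
  assumes "0 \<le> \<rho>"
  shows "emeasure lborel (ball c \<rho>) \<le> ennreal ((2 * \<rho>) ^ DIM('a))"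
proof -
  have "ball c \<rho> \<subseteq> cbox (c - \<rho> *\<^sub>R One) (c + \<rho> *\<^sub>R One)"
  proof
    fix x assume "x \<in> ball c \<rho>"
    then have "\<bar>(x - c) \<bullet> i\<bar> \<le> \<rho>" if "i \<in> Basis" for i
      using Basis_le_norm[OF that, of "x - c"] by (simp add: dist_norm norm_minus_commute)
    then show "x \<in> cbox (c - \<rho> *\<^sub>R One) (c + \<rho> *\<^sub>R One)"
      by (auto simp: mem_box inner_diff_left inner_add_left abs_le_iff algebra_simps)
  qed
  then have "emeasure lborel (ball c \<rho>) \<le> emeasure lborel (cbox (c - \<rho> *\<^sub>R One) (c + \<rho> *\<^sub>R One))"
    by (intro emeasure_mono) auto
  also have "\<dots> = ennreal ((2 * \<rho>) ^ DIM('a))"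
    using assms by (simp add: emeasure_lborel_cbox_eq inner_diff_left inner_add_left algebra_simps)
  finally show ?thesis .
qed

lemma emeasure_hball_slice_le:
  fixes g :: "'m::finite hpt"
  assumes r: "0 < r"
  shows "emeasure lborel ((\<lambda>t. (t, y)) -` hball g r) \<le> ennreal ((2 * r\<^sup>2) ^ 3) * indicator (ball (snd g) r) y"
proof -
  define c where "c = fst g + 2 *\<^sub>R heis_form (snd g) y"
  have mem: "dist (snd g) y < r \<and> dist c t < r\<^sup>2" if "(t, y) \<in> hball g r" for t
  proof -
    have h: "hnorm (t - c, y - snd g) < r"
      using that by (simp add: hball_def hrho_def hinv_hmult_eq c_def algebra_simps)
    have "sqrt (norm (t - c)) < r"
      using sqrt_norm_fst_le_hnorm[of "(t - c, y - snd g)"] h by simp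
    then have "(sqrt (norm (t - c)))\<^sup>2 < r\<^sup>2"
      by (intro power_strict_mono) auto
    then have "norm (t - c) < r\<^sup>2"
      by simp
    then show ?thesis
      using norm_snd_le_hnorm[of "(t - c, y - snd g)"] h by (simp add: dist_norm norm_minus_commute)
  qed
  show ?thesis
  proof (cases "y \<in> ball (snd g) r")
    case True
    have "emeasure lborel ((\<lambda>t. (t, y)) -` hball g r) \<le> emeasure lborel (ball c (r\<^sup>2))"
      using mem by (intro emeasure_mono) auto
    also have "\<dots> \<le> ennreal ((2 * r\<^sup>2) ^ 3)"
      using emeasure_lborel_ball_le[of "r\<^sup>2" c] by simp
    finally show ?thesis
      using True by simp
  next
    case False
    then have "(\<lambda>t. (t, y)) -` hball g r = {}"
      using mem by auto
    then show ?thesis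
      by simp
  qed
qed

lemma emeasure_hball_le:
  fixes g :: "'m::finite hpt"
  assumes r: "0 < r"
  shows "emeasure lborel (hball g r) \<le> ennreal (2 ^ (3 + 4 * CARD('m)) * r ^ (6 + 4 * CARD('m)))"
proof -
  have "hball g r \<in> sets (lborel \<Otimes>\<^sub>M lborel)"
    unfolding lborel_prod by (simp add: open_hball borel_open)
  then have "emeasure lborel (hball g r) = (\<integral>\<^sup>+y. emeasure lborel ((\<lambda>t. (t, y)) -` hball g r) \<partial>lborel)"
    unfolding lborel_prod[symmetric] by (rule lborel_pair.emeasure_pair_measure_alt2)
  also have "\<dots> \<le> (\<integral>\<^sup>+y. ennreal ((2 * r\<^sup>2) ^ 3) * indicator (ball (snd g) r) y \<partial>lborel)"
    by (intro nn_integral_mono emeasure_hball_slice_le r)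
  also have "\<dots> = ennreal ((2 * r\<^sup>2) ^ 3) * emeasure lborel (ball (snd g) r)"
    by (rule nn_integral_cmult_indicator) simp
  also have "\<dots> \<le> ennreal ((2 * r\<^sup>2) ^ 3) * ennreal ((2 * r) ^ (4 * CARD('m)))"
    using emeasure_lborel_ball_le[of r "snd g"] r by (intro mult_left_mono) (auto simp: mult.commute)
  also have "\<dots> = ennreal ((2 * r\<^sup>2) ^ 3 * (2 * r) ^ (4 * CARD('m)))"
    using r by (simp add: ennreal_mult)
  also have "\<dots> = ennreal (2 ^ (3 + 4 * CARD('m)) * r ^ (6 + 4 * CARD('m)))"
    by (simp add: power_mult_distrib power_add mult_ac flip: power_mult)
  finally show ?thesis .
qed

lemma nn_integral_hball_le_maxfun:
  fixes f :: "'m::finite hpt \<Rightarrow> real^4"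
  assumes r: "0 < r"
  shows "(\<integral>\<^sup>+ u \<in> hball g r. ennreal (norm (f u)) \<partial>lborel)
      \<le> ennreal (2 ^ (3 + 4 * CARD('m)) * r ^ (6 + 4 * CARD('m))) * maxfun f g"
proof -
  define X where "X = (\<integral>\<^sup>+ u \<in> hball g r. ennreal (norm (f u)) \<partial>lborel)"
  define \<mu> where "\<mu> = emeasure lborel (hball g r)"
  define A where "A = ennreal (2 ^ (3 + 4 * CARD('m)) * r ^ (6 + 4 * CARD('m)))"
  have "g \<in> hball g r"
    using r by (simp add: hball_def hrho_refl)
  then have M: "X / \<mu> \<le> maxfun f g"
    unfolding maxfun_def X_def \<mu>_def by (intro SUP_upper2[of "(g, r)"]) (use r in auto)
  have "\<mu> \<le> A"
    unfolding \<mu>_def A_def by (rule emeasure_hball_le[OF r])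
  show ?thesis
  proof (cases "\<mu> = 0")
    case True
    then have "X = 0"
      unfolding X_def \<mu>_def by (intro nn_integral_null_set) (simp add: null_sets_def open_hball borel_open)
    then show ?thesis
      by (simp add: X_def)
  next
    case False
    have "\<mu> \<noteq> top"
      using \<open>\<mu> \<le> A\<close> by (auto simp: A_def top_unique)
    then have "X = \<mu> * (X / \<mu>)"
      using False by (simp add: ennreal_times_divide mult.commute[of \<mu>] mult_divide_eq_ennreal)
    also have "\<dots> \<le> A * maxfun f g"
      using \<open>\<mu> \<le> A\<close> M by (intro mult_mono) auto
    finally show ?thesis
      by (simp add: X_def A_def)
  qed
qed

lemma L1_loc_borel_measurable:
  assumes "L1_loc f"
  shows "f \<in> borel_measurable lborel"
proof (rule borel_measurable_LIMSEQ_metric)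
  show "(\<lambda>x. indicator (cball 0 (real n)) x *\<^sub>R f x) \<in> borel_measurable lborel" for n
    using assms unfolding L1_loc_def set_integrable_def
    by (meson borel_measurable_integrable compact_cball)
  show "(\<lambda>n. indicator (cball 0 (real n)) x *\<^sub>R f x) \<longlonglongrightarrow> f x" for x
  proof (rule tendsto_eventually)
    obtain N :: nat where "norm x \<le> real N"
      using real_arch_simple by blast
    then show "\<forall>\<^sub>F n in sequentially. indicator (cball 0 (real n)) x *\<^sub>R f x = f x"
      unfolding eventually_sequentially by (intro exI[of _ N]) (auto simp: indicator_def)
  qed
qed

section \<open>Dyadic decomposition of a truncated kernel\<close>

lemma dyadic_scale_exists:
  fixes \<rho> \<eta> :: real
  assumes "0 < \<rho>" "\<rho> \<le> \<eta>"
  obtains j :: nat where "\<eta> / 2 ^ Suc j < \<rho>" "\<rho> \<le> \<eta> / 2 ^ j"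
proof -
  obtain n where "(1 / 2) ^ n < \<rho> / \<eta>"
    using real_arch_pow_inv[of "\<rho> / \<eta>" "1 / 2"] assms by auto
  then have "\<exists>n. \<eta> / 2 ^ n < \<rho>"
    using assms by (auto simp: field_simps power_one_over)
  then obtain n where n: "\<eta> / 2 ^ n < \<rho>" and least: "\<And>m. m < n \<Longrightarrow> \<not> \<eta> / 2 ^ m < \<rho>"
    unfolding exists_least_iff[of "\<lambda>n. \<eta> / 2 ^ n < \<rho>"] by blast
  then obtain j where "n = Suc j"
    using assms by (cases n) auto
  with n least[of j] show ?thesis
    using that by auto
qed

lemma ennreal_le_dyadic_sum:
  fixes \<kappa> \<rho> \<eta> A :: real and x :: ennreal
  assumes "0 < \<rho>" "\<rho> \<le> \<eta>" "\<bar>\<kappa>\<bar> \<le> A / \<rho> ^ n"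
  shows "ennreal \<bar>\<kappa>\<bar> * x
    \<le> (\<Sum>j. ennreal (A * (2 ^ Suc j / \<eta>) ^ n) * (x * indicator {..< 2 * \<eta> / 2 ^ j} \<rho>))"
proof -
  obtain j where j: "\<eta> / 2 ^ Suc j < \<rho>" "\<rho> \<le> \<eta> / 2 ^ j"
    using dyadic_scale_exists[OF assms(1,2)] .
  have "0 \<le> A / \<rho> ^ n" "0 < \<rho> ^ n"
    using order_trans[OF abs_ge_zero assms(3)] assms(1) by simp_all
  then have "0 \<le> A"
    by (auto simp: zero_le_divide_iff)
  have "(\<eta> / 2 ^ Suc j) ^ n \<le> \<rho> ^ n"
    using j(1) assms(1,2) by (intro power_mono) auto
  then have "1 / \<rho> ^ n \<le> 1 / (\<eta> / 2 ^ Suc j) ^ n"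
    using assms(1,2) by (intro divide_left_mono mult_pos_pos) auto
  also have "1 / (\<eta> / 2 ^ Suc j) ^ n = (2 ^ Suc j / \<eta>) ^ n"
    by (simp add: power_divide)
  finally have "A / \<rho> ^ n \<le> A * (2 ^ Suc j / \<eta>) ^ n"
    using mult_left_mono[OF _ \<open>0 \<le> A\<close>] by fastforce
  then have "\<bar>\<kappa>\<bar> \<le> A * (2 ^ Suc j / \<eta>) ^ n"
    using assms(3) by simp
  moreover have "\<rho> < 2 * \<eta> / 2 ^ j"
    using j(2) assms(1,2) by (simp add: field_simps)
  ultimately have "ennreal \<bar>\<kappa>\<bar> * x
      \<le> ennreal (A * (2 ^ Suc j / \<eta>) ^ n) * (x * indicator {..< 2 * \<eta> / 2 ^ j} \<rho>)"
    by (auto intro!: mult_right_mono ennreal_leI)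
  also have "\<dots> \<le> (\<Sum>j. ennreal (A * (2 ^ Suc j / \<eta>) ^ n) * (x * indicator {..< 2 * \<eta> / 2 ^ j} \<rho>))"
    using sum_le_suminf[OF summableI, of "{j}"] by simp
  finally show ?thesis .
qed

lemma dyadic_radius_power_eq:
  fixes \<eta> :: real
  assumes "0 < \<eta>"
  shows "(2 ^ Suc j / \<eta>) ^ n * (2 * \<eta> / 2 ^ j) ^ Suc n = 4 ^ n * (2 * \<eta>) * (1 / 2) ^ j"
proof -
  have "(2 ^ Suc j / \<eta>) ^ n * (2 * \<eta> / 2 ^ j) ^ Suc n = (2 ^ Suc j / \<eta> * (2 * \<eta> / 2 ^ j)) ^ n * (2 * \<eta> / 2 ^ j)"
    by (metis power_Suc2 power_mult_distrib mult.assoc)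
  also have "2 ^ Suc j / \<eta> * (2 * \<eta> / 2 ^ j) = 4"
    using assms by simp
  finally show ?thesis
    by (simp add: power_one_over)
qed

lemma suminf_ennreal_geometric_half:
  fixes K :: real
  assumes "0 \<le> K"
  shows "(\<Sum>j. ennreal (K * (1 / 2) ^ j)) = ennreal (2 * K)"
proof -
  have "(\<lambda>j. K * (1 / 2) ^ j) sums (K * 2)"
    using sums_mult[OF geometric_sums[of "1 / 2 :: real"], of K] by simp
  then show ?thesis
    using assms by (simp add: suminf_ennreal2 sums_summable sums_unique[symmetric] mult.commute)
qed

text \<open>On the annulus \<open>2\<eta>/2\<^sup>j\<^sup>+\<^sup>1 < \<rho> \<le> 2\<eta>/2\<^sup>j\<close> the kernel is at most \<open>A (2\<^sup>j\<^sup>+\<^sup>1/\<eta>)\<^sup>n\<close>, and the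
  annulus lies in the ball \<open>\<rho> < 2\<eta>/2\<^sup>j\<close>, so the growth bound leaves a geometric series in \<open>j\<close>.\<close>

lemma nn_integral_truncated_kernel_le:
  fixes k \<rho> :: "'a \<Rightarrow> real" and h :: "'a \<Rightarrow> ennreal" and H :: ennreal
  assumes "0 < \<eta>" "0 \<le> A" "0 \<le> D"
    and kernel: "\<And>u. k u \<noteq> 0 \<Longrightarrow> 0 < \<rho> u \<and> \<rho> u \<le> \<eta> \<and> \<bar>k u\<bar> \<le> A / \<rho> u ^ n"
    and meas: "h \<in> borel_measurable M" "\<rho> \<in> borel_measurable M"
    and growth: "\<And>r. 0 < r \<Longrightarrow> (\<integral>\<^sup>+ u. h u * indicator {..<r} (\<rho> u) \<partial>M) \<le> ennreal (D * r ^ Suc n) * H"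
  shows "(\<integral>\<^sup>+ u. ennreal \<bar>k u\<bar> * h u \<partial>M) \<le> ennreal (4 ^ Suc n * A * D * \<eta>) * H"
proof -
  define r where "r j = 2 * \<eta> / 2 ^ j" for j :: nat
  define c where "c j = ennreal (A * (2 ^ Suc j / \<eta>) ^ n)" for j :: nat
  have r: "0 < r j" "(2 ^ Suc j / \<eta>) ^ n * r j ^ Suc n = 4 ^ n * (2 * \<eta>) * (1 / 2) ^ j" for j
    using assms(1) dyadic_radius_power_eq[OF assms(1)] by (simp_all add: r_def)
  have "(\<integral>\<^sup>+ u. ennreal \<bar>k u\<bar> * h u \<partial>M) \<le> (\<integral>\<^sup>+ u. (\<Sum>j. c j * (h u * indicator {..<r j} (\<rho> u))) \<partial>M)"
  proof (rule nn_integral_mono)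
    fix u
    show "ennreal \<bar>k u\<bar> * h u \<le> (\<Sum>j. c j * (h u * indicator {..<r j} (\<rho> u)))"
      using ennreal_le_dyadic_sum[of "\<rho> u" \<eta> "k u" A n "h u"] kernel[of u]
      by (cases "k u = 0") (auto simp: c_def r_def)
  qed
  also have "\<dots> = (\<Sum>j. c j * (\<integral>\<^sup>+ u. h u * indicator {..<r j} (\<rho> u) \<partial>M))"
    using meas by (simp add: nn_integral_suminf nn_integral_cmult)
  also have "\<dots> \<le> (\<Sum>j. c j * (ennreal (D * r j ^ Suc n) * H))"
    by (intro suminf_le mult_left_mono growth r(1)) auto
  also have "\<dots> = (\<Sum>j. ennreal (4 ^ n * A * D * (2 * \<eta>) * (1 / 2) ^ j)) * H"
  proof -
    have "c j * ennreal (D * r j ^ Suc n) = ennreal (4 ^ n * A * D * (2 * \<eta>) * (1 / 2) ^ j)" for j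
    proof -
      have "A * (2 ^ Suc j / \<eta>) ^ n * (D * r j ^ Suc n) = (A * D) * ((2 ^ Suc j / \<eta>) ^ n * r j ^ Suc n)"
        by (simp only: mult_ac)
      also have "\<dots> = (A * D) * (4 ^ n * (2 * \<eta>) * (1 / 2) ^ j)"
        by (simp only: r(2))
      also have "\<dots> = 4 ^ n * A * D * (2 * \<eta>) * (1 / 2) ^ j"
        by (simp only: mult_ac)
      finally have real: "A * (2 ^ Suc j / \<eta>) ^ n * (D * r j ^ Suc n) = 4 ^ n * A * D * (2 * \<eta>) * (1 / 2) ^ j" .
      have "c j * ennreal (D * r j ^ Suc n) = ennreal (A * (2 ^ Suc j / \<eta>) ^ n * (D * r j ^ Suc n))"
        unfolding c_def by (rule ennreal_mult[symmetric]) (use assms(1-3) r(1)[of j] in auto)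
      then show ?thesis
        by (simp only: real)
    qed
    then show ?thesis
      by (simp add: mult.assoc[symmetric])
  qed
  also have "\<dots> = ennreal (4 ^ Suc n * A * D * \<eta>) * H"
    using assms by (subst suminf_ennreal_geometric_half) (auto simp: mult_ac)
  finally show ?thesis .
qed

section \<open>The truncated commutator\<close>

lemma norm_integral_cutoff_diff_le:
  fixes F :: "'a \<Rightarrow> 'b::{banach, second_countable_topology}" and \<Phi> :: "'a \<Rightarrow> real"
  assumes F: "integrable M F" and \<Phi>: "\<Phi> \<in> borel_measurable M" "\<And>u. \<bar>\<Phi> u\<bar> \<le> 1"
  shows "ennreal (norm ((\<integral>u. \<Phi> u *\<^sub>R F u \<partial>M) - (\<integral>u. F u \<partial>M)))
    \<le> (\<integral>\<^sup>+ u. ennreal (\<bar>\<Phi> u - 1\<bar> * norm (F u)) \<partial>M)"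
proof -
  have "(\<lambda>u. \<Phi> u *\<^sub>R F u) \<in> borel_measurable M"
    using \<Phi>(1) borel_measurable_integrable[OF F] by (rule borel_measurable_scaleR)
  then have "integrable M (\<lambda>u. \<Phi> u *\<^sub>R F u)"
    by (rule Bochner_Integration.integrable_bound[OF F]) (use \<Phi>(2) in \<open>auto intro!: AE_I2 mult_left_le_one_le\<close>)
  then have "(\<integral>u. \<Phi> u *\<^sub>R F u \<partial>M) - (\<integral>u. F u \<partial>M) = (\<integral>u. (\<Phi> u - 1) *\<^sub>R F u \<partial>M)"
    and "integrable M (\<lambda>u. (\<Phi> u - 1) *\<^sub>R F u)"
    using F by (simp_all add: scaleR_diff_left)
  then show ?thesis
    using integral_norm_bound_ennreal[of M "\<lambda>u. (\<Phi> u - 1) *\<^sub>R F u"] by simp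
qed

lemma norm_qmult: "norm (qmult a b) = norm a * norm b"
proof -
  have "(norm (qmult a b))\<^sup>2 = (norm a * norm b)\<^sup>2"
    unfolding power_mult_distrib power2_norm_eq_inner inner_vec_def sum_4
    by (simp add: qmult_def) algebra
  then show ?thesis
    by (simp add: power2_eq_iff_nonneg)
qed

lemma truncated_kernel_size_le:
  fixes K :: "'m::finite hpt \<Rightarrow> real^4" and \<phi> :: "real \<Rightarrow> real"
  assumes \<phi>: "\<And>x. 0 \<le> \<phi> x \<and> \<phi> x \<le> 1" "\<And>x. 1 < x \<Longrightarrow> \<phi> x = 1"
    and K: "\<And>p. 0 < hnorm p \<Longrightarrow> norm (K p) \<le> A / hnorm p ^ (6 + 4 * CARD('m))" "0 \<le> A"
    and b: "Cc_infty b" and "0 < \<eta>"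
    and nonzero: "(\<phi> (hrho g u / \<eta>) - 1) * (b g - b u) * norm (K (hmult (hinv u) g)) \<noteq> 0"
  shows "0 < hrho u g \<and> hrho u g \<le> \<eta> \<and>
    \<bar>(\<phi> (hrho g u / \<eta>) - 1) * (b g - b u) * norm (K (hmult (hinv u) g))\<bar>
      \<le> 3 * gradH_Linf b * A / hrho u g ^ (5 + 4 * CARD('m))"
proof -
  have L: "0 \<le> gradH_Linf b"
    by (rule gradH_Linf_nonneg[OF b])
  have lip: "\<bar>b g - b u\<bar> \<le> 3 * hrho u g * gradH_Linf b"
    using hrho_lipschitz_of_horizontal[OF Cc_infty_horizontal_increment_le[OF b] L]
    by (simp add: hrho_commute)
  have "\<phi> (hrho u g / \<eta>) \<noteq> 1" "b g \<noteq> b u"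
    using nonzero by (auto simp: hrho_commute)
  then have "hrho u g \<noteq> 0" "\<not> 1 < hrho u g / \<eta>"
    using lip \<phi>(2) by auto
  then have \<rho>: "0 < hrho u g" "hrho u g \<le> \<eta>"
    using \<open>0 < \<eta>\<close> hnorm_nonneg[of "hmult (hinv g) u"] by (auto simp: hrho_def less_le)
  have "\<bar>(\<phi> (hrho g u / \<eta>) - 1) * (b g - b u) * norm (K (hmult (hinv u) g))\<bar>
      \<le> 1 * (3 * hrho u g * gradH_Linf b) * (A / hrho u g ^ (6 + 4 * CARD('m)))"
    unfolding abs_mult using \<phi>(1) lip K \<rho> L
    by (intro mult_mono) (auto simp: hrho_commute hrho_def)
  also have "\<dots> = 3 * gradH_Linf b * A / hrho u g ^ (5 + 4 * CARD('m))"
  proof -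
    have "6 + 4 * CARD('m) = Suc (5 + 4 * CARD('m))"
      by simp
    then show ?thesis
      using \<rho> by (simp only: power_Suc) (simp add: field_simps)
  qed
  finally show ?thesis
    using \<rho> by blast
qed

lemma truncated_commutator_difference_le:
  fixes K :: "'m::finite hpt \<Rightarrow> real^4" and \<phi> :: "real \<Rightarrow> real"
  assumes \<phi>: "\<phi> \<in> borel_measurable borel" "\<And>x. 0 \<le> \<phi> x \<and> \<phi> x \<le> 1" "\<And>x. 1 < x \<Longrightarrow> \<phi> x = 1"
    and K: "\<And>p. 0 < hnorm p \<Longrightarrow> norm (K p) \<le> A / hnorm p ^ (6 + 4 * CARD('m))" "0 \<le> A"
    and b: "Cc_infty b" and "0 < \<eta>" and f: "f \<in> borel_measurable lborel"
    and int: "integrable lborel (\<lambda>u. (b g - b u) *\<^sub>R qmult (K (hmult (hinv u) g)) (f u))"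
  shows "ennreal (norm ((\<integral>u. (b g - b u) *\<^sub>R (\<phi> (hrho g u / \<eta>) *\<^sub>R qmult (K (hmult (hinv u) g)) (f u)) \<partial>lborel)
      - (\<integral>u. (b g - b u) *\<^sub>R qmult (K (hmult (hinv u) g)) (f u) \<partial>lborel)))
    \<le> ennreal (3 * 4 ^ (6 + 4 * CARD('m)) * 2 ^ (3 + 4 * CARD('m)) * A * \<eta> * gradH_Linf b) * maxfun f g"
proof -
  define k where "k u = (\<phi> (hrho g u / \<eta>) - 1) * (b g - b u) * norm (K (hmult (hinv u) g))" for u
  have "(\<lambda>u. hrho u g / \<eta>) \<in> borel_measurable borel"
    using \<open>0 < \<eta>\<close> by (intro borel_measurable_continuous_onI continuous_intros continuous_on_hrho) auto
  then have "(\<lambda>u. \<phi> (hrho g u / \<eta>)) \<in> borel_measurable lborel"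
    using measurable_compose[OF _ \<phi>(1)] by (simp add: hrho_commute[of g])
  from norm_integral_cutoff_diff_le[OF int this]
  have "ennreal (norm ((\<integral>u. (b g - b u) *\<^sub>R (\<phi> (hrho g u / \<eta>) *\<^sub>R qmult (K (hmult (hinv u) g)) (f u)) \<partial>lborel)
      - (\<integral>u. (b g - b u) *\<^sub>R qmult (K (hmult (hinv u) g)) (f u) \<partial>lborel)))
    \<le> (\<integral>\<^sup>+ u. ennreal (\<bar>\<phi> (hrho g u / \<eta>) - 1\<bar> * norm ((b g - b u) *\<^sub>R qmult (K (hmult (hinv u) g)) (f u))) \<partial>lborel)"
    using \<phi>(2) by (simp add: abs_le_iff mult.commute)
  also have "\<dots> = (\<integral>\<^sup>+ u. ennreal \<bar>k u\<bar> * ennreal (norm (f u)) \<partial>lborel)"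
    by (intro nn_integral_cong) (simp add: k_def norm_qmult abs_mult mult_ac flip: ennreal_mult)
  also have "\<dots> \<le> ennreal (4 ^ Suc (5 + 4 * CARD('m)) * (3 * gradH_Linf b * A) * 2 ^ (3 + 4 * CARD('m)) * \<eta>)
      * maxfun f g"
  proof (rule nn_integral_truncated_kernel_le[where \<rho> = "\<lambda>u. hrho u g"])
    show "0 < hrho u g \<and> hrho u g \<le> \<eta> \<and> \<bar>k u\<bar> \<le> 3 * gradH_Linf b * A / hrho u g ^ (5 + 4 * CARD('m))"
      if "k u \<noteq> 0" for u
      using truncated_kernel_size_le[where \<phi> = \<phi>, OF \<phi>(2,3) K b \<open>0 < \<eta>\<close>] that by (simp add: k_def)
    show "(\<integral>\<^sup>+ u. ennreal (norm (f u)) * indicator {..<r} (hrho u g) \<partial>lborel)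
      \<le> ennreal (2 ^ (3 + 4 * CARD('m)) * r ^ Suc (5 + 4 * CARD('m))) * maxfun f g" if "0 < r" for r
      using nn_integral_hball_le_maxfun[OF that, of f g] by (simp add: hball_def indicator_def)
  qed (use \<open>0 < \<eta>\<close> K(2) gradH_Linf_nonneg[OF b] f in
    \<open>auto intro: borel_measurable_continuous_onI continuous_on_hrho\<close>)
  finally show ?thesis
    by (simp add: mult_ac)
qed

theorem lemma4p3:
  fixes \<phi> :: "real \<Rightarrow> real" and c :: real
  assumes phi_smooth: "smooth_fun \<phi>"
    and phi0: "\<And>x. x < 1/2 \<Longrightarrow> \<phi> x = 0"
    and phi01: "\<And>x. 1/2 \<le> x \<Longrightarrow> x \<le> 1 \<Longrightarrow> 0 \<le> \<phi> x \<and> \<phi> x \<le> 1"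
    and phi1: "\<And>x. 1 < x \<Longrightarrow> \<phi> x = 1"
  shows "\<exists>C>0. \<forall>(b :: 'm::finite hpt \<Rightarrow> real) \<eta> f g.
     Cc_infty b \<longrightarrow> 0 < \<eta> \<longrightarrow> L1_loc f \<longrightarrow>
     integrable lborel (\<lambda>u. (b g - b u) *\<^sub>R qmult (szego_K c (hmult (hinv u) g)) (f u)) \<longrightarrow>
     ennreal (norm (comm_C_eta \<phi> \<eta> c b f g - comm_C c b f g))
       \<le> ennreal (C * \<eta> * gradH_Linf b) * maxfun f g"
proof -
  define A where "A = \<bar>c\<bar> * fact (2 * CARD('m)) * 40 * 4 ^ CARD('m) + 1"
  have A: "0 < A"
    by (simp add: A_def add_nonneg_pos)
  have K: "norm (szego_K c p) \<le> A / hnorm p ^ (6 + 4 * CARD('m))" if "0 < hnorm p" for p :: "'m hpt"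
    using that by (rule order_trans[OF norm_szego_K_le]) (auto simp: A_def hnorm_nonneg intro!: divide_right_mono)
  have \<phi>_meas: "\<phi> \<in> borel_measurable borel"
    using smooth_fun_continuous_on[OF phi_smooth] by (rule borel_measurable_continuous_onI)
  have \<phi>_range: "0 \<le> \<phi> x \<and> \<phi> x \<le> 1" for x
    using phi0[of x] phi01[of x] phi1[of x] by (cases "x < 1/2"; cases "1 < x") auto
  show ?thesis
  proof (intro exI[of _ "3 * 4 ^ (6 + 4 * CARD('m)) * 2 ^ (3 + 4 * CARD('m)) * A"] conjI allI impI)
    fix b :: "'m hpt \<Rightarrow> real" and \<eta> :: real and f :: "'m hpt \<Rightarrow> real^4" and g :: "'m hpt"
    assume "Cc_infty b" "0 < \<eta>" "L1_loc f"
      "integrable lborel (\<lambda>u. (b g - b u) *\<^sub>R qmult (szego_K c (hmult (hinv u) g)) (f u))"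
    then show "ennreal (norm (comm_C_eta \<phi> \<eta> c b f g - comm_C c b f g))
      \<le> ennreal (3 * 4 ^ (6 + 4 * CARD('m)) * 2 ^ (3 + 4 * CARD('m)) * A * \<eta> * gradH_Linf b) * maxfun f g"
      unfolding comm_C_eta_def comm_C_def using K A L1_loc_borel_measurable
      by (intro truncated_commutator_difference_le[OF \<phi>_meas \<phi>_range phi1]) auto
  qed (use A in simp)
qed

end
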